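(* (FCN) For any $\bm{W}\in\mathbb{R}^{d\times K}$ and any fixed $\bm{u}=[\bm{u}_1^\top,\dots,\bm{u}_K^\top]^\top\in\mathbb{R}^{dK}$ with $\|\bm{u}\|_2=1$, $$\|\bm{u}^\top\nabla\ell(\bm{W};\bm{x},y)\|_{\psi_2}\le\sqrt K.$$ (CNN) There is a constant $C$ such that for any $\bm{w}\in\mathbb{R}^m$ and any fixed $\bm{u}\in\mathbb{R}^m$ with $\|\bm{u}\|_2=1$, $$\|\langle\bm{u},\nabla\ell(\bm{w};\bm{x},y)\rangle\|_{\psi_2}\le CK.$$
   Context: $\phi(x)=1/(1+e^{-x})$. FCN: $H(\bm{W},\bm{x})=\frac1K\sum_k\phi(\bm{w}_k^\top\bm{x})$ for $\bm{W}=[\bm{w}_1,\dots,\bm{w}_K]$, gradient w.r.t. $\mathrm{vec}(\bm{W})$. CNN: $d=mK$, $\bm{x}^{(k)}=(x_{m(k-1)+1},\dots,x_{mk})^\top$, $H(\bm{w},\bm{x})=\frac1K\sum_k\phi(\bm{w}^\top\bm{x}^{(k)})$. $\bm{x}\sim\mathcal{N}(\bm{0},\bm{I}_d)$, $y\in\{0,1\}$ (with $\mathbb{P}(y=1\mid\bm{x})=H(\bm{W}^\star,\bm{x})$, resp. $H(\bm{w}^\star,\bm{x})$, for some ground truth). Loss $\ell=-y\log H-(1-y)\log(1-H)$. Sub-Gaussian norm $\|X\|_{\psi_2}=\sup_{p\ge1}p^{-1/2}(\mathbb{E}|X|^p)^{1/p}$. *)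

theory Defs
  imports "HOL-Probability.Probability"
begin

definition sigmoid :: "real \<Rightarrow> real" where
  "sigmoid t = 1 / (1 + exp (- t))"

text \<open>Vectors in R^n are functions nat => real, only indices < n matter.
  A matrix W in R^(d x K) is W i k (row i < d, column k < K); column k is w_k.\<close>

definition fcn :: "nat \<Rightarrow> nat \<Rightarrow> (nat \<Rightarrow> nat \<Rightarrow> real) \<Rightarrow> (nat \<Rightarrow> real) \<Rightarrow> real" where
  "fcn d K W x = (1 / real K) * (\<Sum>k<K. sigmoid (\<Sum>i<d. W i k * x i))"

text \<open>CNN with d = m*K, patch k (0-based) is (x (m*k), ..., x (m*k + m - 1)).\<close>
definition cnn :: "nat \<Rightarrow> nat \<Rightarrow> (nat \<Rightarrow> real) \<Rightarrow> (nat \<Rightarrow> real) \<Rightarrow> real" where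
  "cnn m K w x = (1 / real K) * (\<Sum>k<K. sigmoid (\<Sum>i<m. w i * x (m * k + i)))"

definition ce_loss :: "real \<Rightarrow> bool \<Rightarrow> real" where
  "ce_loss h y = - (if y then 1 else 0) * ln h - (1 - (if y then 1 else 0)) * ln (1 - h)"

definition gauss :: "nat \<Rightarrow> (nat \<Rightarrow> real) measure" where
  "gauss d = PiM {..<d} (\<lambda>_. density lborel std_normal_density)"

text \<open>Joint law of (x,y): x ~ N(0,I_d), P(y = True | x) = Hstar x.\<close>
definition joint :: "nat \<Rightarrow> ((nat \<Rightarrow> real) \<Rightarrow> real) \<Rightarrow> ((nat \<Rightarrow> real) \<times> bool) measure" where
  "joint d Hstar = density (gauss d \<Otimes>\<^sub>M count_space UNIV)
      (\<lambda>(x, y). ennreal (if y then Hstar x else 1 - Hstar x))"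

definition enn_powr :: "ennreal \<Rightarrow> real \<Rightarrow> ennreal" where
  "enn_powr a r = (if a = \<infinity> then \<infinity> else ennreal (enn2real a powr r))"

definition psi2_norm :: "'a measure \<Rightarrow> ('a \<Rightarrow> real) \<Rightarrow> ennreal" where
  "psi2_norm M X = (SUP p\<in>{1::real..}. ennreal (p powr (-1/2)) *
      enn_powr (\<integral>\<^sup>+ \<omega>. ennreal (\<bar>X \<omega>\<bar> powr p) \<partial>M) (1 / p))"

end

theory Submission
  imports Defs
begin

text \<open>The directional derivative of the loss is bounded pointwise by the sum over
  the hidden units of \<open>\<bar>\<langle>u\<^sub>k, x\<^sub>k\<rangle>\<bar>\<close>, where \<open>x\<^sub>k\<close> is the input seen by unit
  \<open>k\<close>: the factor \<open>\<sigma>(1 - \<sigma>)\<close> of the sigmoid derivatives is cancelled by the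
  denominator \<open>H\<close> resp. \<open>1 - H\<close> of the cross-entropy derivative. Each
  \<open>\<langle>u\<^sub>k, x\<^sub>k\<rangle>\<close> is centred normal with standard deviation \<open>\<parallel>u\<^sub>k\<parallel>\<close>, so its
  \<open>p\<close>-th absolute moment is at most \<open>\<parallel>u\<^sub>k\<parallel>\<^sup>p p\<^sup>p\<^sup>/\<^sup>2\<close>, and a Minkowski-type
  inequality bounds the \<open>L\<^sup>p\<close> norm of the sum by \<open>\<surd>p \<Sum>\<^sub>k \<parallel>u\<^sub>k\<parallel>\<close>. Hence the
  \<open>\<psi>\<^sub>2\<close>-norm is at most \<open>\<Sum>\<^sub>k \<parallel>u\<^sub>k\<parallel>\<close>, which is at most \<open>\<surd>K\<close> by Cauchy-Schwarz
  for the FCN and equals \<open>K\<close> for the CNN, whose filter is shared by all patches.\<close>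

section \<open>Power inequalities\<close>

lemma abs_powr_le_convex_comb_even_powers:
  fixes z p \<theta> :: real and n :: nat
  assumes "0 \<le> \<theta>" "\<theta> \<le> 1" and p: "p = \<theta> * (2 * n) + (1 - \<theta>) * (2 * n + 2)"
  shows "\<bar>z\<bar> powr p \<le> \<theta> * z ^ (2 * n) + (1 - \<theta>) * z ^ (2 * n + 2)"
proof (cases "z = 0")
  case True
  then show ?thesis using assms by (auto simp: power_0_left)
next
  case False
  have even_power: "z ^ (2 * q) = exp (real (2 * q) * ln \<bar>z\<bar>)" for q :: nat
  proof -
    have "z ^ (2 * q) = exp (ln \<bar>z\<bar>) ^ (2 * q)" using False by (simp add: power_even_abs)
    then show ?thesis by (simp add: exp_of_nat_mult[symmetric])
  qed
  have "\<bar>z\<bar> powr p = exp ((1 - (1 - \<theta>)) * (real (2 * n) * ln \<bar>z\<bar>) + (1 - \<theta>) * (real (2 * (n + 1)) * ln \<bar>z\<bar>))"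
    using False by (simp add: powr_def p algebra_simps)
  also have "\<dots> \<le> (1 - (1 - \<theta>)) * exp (real (2 * n) * ln \<bar>z\<bar>) + (1 - \<theta>) * exp (real (2 * (n + 1)) * ln \<bar>z\<bar>)"
    using convex_onD[OF exp_convex, of "1 - \<theta>"] assms by simp
  also have "\<dots> = \<theta> * z ^ (2 * n) + (1 - \<theta>) * z ^ (2 * n + 2)"
    using even_power[of n] even_power[of "n + 1"] by simp
  finally show ?thesis .
qed

lemma convex_on_powr_nonneg:
  fixes p :: real
  assumes p: "p \<ge> 1"
  shows "convex_on {0..} (\<lambda>x. x powr p)"
proof (rule convex_onI)
  fix t x y :: real
  assume t: "0 < t" "t < 1" and xy: "x \<in> {0..}" "y \<in> {0..}"
  have shrink: "(a * b) powr p \<le> a * b powr p" if "0 < a" "a \<le> 1" "0 \<le> b" for a b :: real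
  proof -
    have "a powr p \<le> a powr 1" using that p by (intro powr_mono') auto
    then show ?thesis using that by (simp add: powr_mult mult_right_mono)
  qed
  consider "x = 0" | "y = 0" | "x > 0" "y > 0" using xy by force
  then show "((1 - t) *\<^sub>R x + t *\<^sub>R y) powr p \<le> (1 - t) * x powr p + t * y powr p"
  proof cases
    case 1
    then show ?thesis using shrink[of t y] t xy p by simp
  next
    case 2
    then show ?thesis using shrink[of "1 - t" x] t xy p by simp
  next
    case 3
    then show ?thesis using convex_onD[OF powr_convex[OF p], of t x y] t by auto
  qed
qed (simp add: convex_real_interval)

text \<open>Jensen's inequality for the weights \<open>s k / (\<Sum>s)\<close> at the points
  \<open>(\<Sum>s) * a k / s k\<close>.\<close>
lemma powr_sum_le_weighted_sum:
  fixes s a :: "'i \<Rightarrow> real" and p :: real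
  assumes J: "finite J" "J \<noteq> {}" and p: "p \<ge> 1"
    and s: "\<And>k. k \<in> J \<Longrightarrow> 0 < s k" and a: "\<And>k. k \<in> J \<Longrightarrow> 0 \<le> a k"
  shows "(\<Sum>k\<in>J. a k) powr p \<le> (\<Sum>k\<in>J. s k) powr (p - 1) * (\<Sum>k\<in>J. s k powr (1 - p) * a k powr p)"
proof -
  define S where "S = (\<Sum>k\<in>J. s k)"
  have S: "0 < S" unfolding S_def using J s by (intro sum_pos) auto
  have "(\<Sum>k\<in>J. a k) = (\<Sum>k\<in>J. (s k / S) *\<^sub>R (S * a k / s k))"
    using S s by (intro sum.cong) (auto simp: less_imp_neq[symmetric])
  also have "\<dots> powr p \<le> (\<Sum>k\<in>J. (s k / S) * (S * a k / s k) powr p)"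
    using convex_on_sum[OF J convex_on_powr_nonneg[OF p], of "\<lambda>k. s k / S" "\<lambda>k. S * a k / s k"] S s a
    by (auto simp: S_def sum_divide_distrib[symmetric] less_imp_le)
  also have "\<dots> = (\<Sum>k\<in>J. S powr (p - 1) * (s k powr (1 - p) * a k powr p))"
  proof (intro sum.cong refl)
    fix k assume k: "k \<in> J"
    have "(s k / S) * (S * a k / s k) powr p = (s k / S) * (S powr p * a k powr p / s k powr p)"
      using S s[OF k] a[OF k] by (simp add: powr_mult powr_divide)
    also have "\<dots> = S powr p / S * (s k / s k powr p * a k powr p)"
      using S s[OF k] by (simp add: field_simps)
    also have "\<dots> = S powr (p - 1) * (s k powr (1 - p) * a k powr p)"
      using S s[OF k] by (simp add: powr_diff)
    finally show "(s k / S) * (S * a k / s k) powr p = S powr (p - 1) * (s k powr (1 - p) * a k powr p)" .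
  qed
  finally show ?thesis by (simp add: S_def sum_distrib_left)
qed

section \<open>Gaussian moments\<close>

definition std_normal_even_moment :: "nat \<Rightarrow> real" where
  "std_normal_even_moment q = fact (2 * q) / (2 ^ q * fact q)"

lemma std_normal_even_moment_0 [simp]: "std_normal_even_moment 0 = 1"
  by (simp add: std_normal_even_moment_def)

lemma std_normal_even_moment_pos: "0 < std_normal_even_moment q"
  by (simp add: std_normal_even_moment_def)

lemma std_normal_even_moment_Suc:
  "std_normal_even_moment (Suc q) = std_normal_even_moment q * (2 * q + 1)"
proof -
  have "fact (2 * Suc q) = (fact (2 * q) :: real) * (2 * real q + 1) * (2 * real q + 2)"
    and "(2::real) ^ Suc q * fact (Suc q) = 2 ^ q * fact q * (2 * real q + 2)"
    by (simp_all add: algebra_simps)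
  then have "std_normal_even_moment (Suc q)
      = (fact (2 * q) * (2 * real q + 1) * (2 * real q + 2)) / (2 ^ q * fact q * (2 * real q + 2))"
    by (simp only: std_normal_even_moment_def)
  also have "\<dots> = std_normal_even_moment q * (2 * q + 1)"
    by (simp add: std_normal_even_moment_def)
  finally show ?thesis .
qed

lemma std_normal_even_moment_Suc_le:
  assumes "n \<ge> 2"
  shows "std_normal_even_moment (Suc n) \<le> (2 * real n) ^ n"
  using assms
proof (induction n rule: dec_induct)
  case base
  show ?case by (simp add: std_normal_even_moment_Suc numeral_eq_Suc)
next
  case (step n)
  have n: "real n \<ge> 2" using step by simp
  have Bernoulli: "2 \<le> (1 + 1 / real n) ^ n"
    using Bernoulli_inequality[of "1 / real n" n] n by (simp add: order_trans[of "-1" 0])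
  have "std_normal_even_moment (Suc (Suc n)) = std_normal_even_moment (Suc n) * (2 * real n + 3)"
    by (simp add: std_normal_even_moment_Suc)
  also have "\<dots> \<le> (2 * real n) ^ n * ((2 * real n + 2) * (1 + 1 / real n) ^ n)"
  proof (intro mult_mono)
    show "2 * real n + 3 \<le> (2 * real n + 2) * (1 + 1 / real n) ^ n"
      using mult_left_mono[OF Bernoulli, of "2 * real n + 2"] by simp
  qed (use step.IH in auto)
  also have "\<dots> = (2 * real (Suc n)) ^ Suc n"
  proof -
    have "2 * real (Suc n) = 2 * real n * (1 + 1 / real n)" using n by (simp add: field_simps)
    then have "(2 * real (Suc n)) ^ n = (2 * real n) ^ n * (1 + 1 / real n) ^ n"
      by (simp add: power_mult_distrib)
    then show ?thesis by (simp add: algebra_simps)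
  qed
  finally show ?case .
qed

lemma std_normal_even_moment_interpolation_le:
  fixes p :: real
  assumes p: "p \<ge> 1" "2 * real n \<le> p" "p < 2 * real n + 2"
  defines "\<theta> \<equiv> (2 * real n + 2 - p) / 2"
  shows "\<theta> * std_normal_even_moment n + (1 - \<theta>) * std_normal_even_moment (Suc n) \<le> p powr (p / 2)"
proof -
  have \<theta>: "0 \<le> \<theta>" "\<theta> \<le> 1" using p by (auto simp: \<theta>_def)
  consider "n = 0" | "n = 1" | "n \<ge> 2" by linarith
  then show ?thesis
  proof cases
    case 1
    have "1 \<le> p powr (p / 2)" using p by (intro ge_one_powr_ge_zero) auto
    then show ?thesis using 1 by (simp add: std_normal_even_moment_Suc)
  next
    case 2
    have "p powr 1 \<le> p powr (p / 2)" using p 2 by (intro powr_mono) auto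
    moreover have "\<theta> * std_normal_even_moment n + (1 - \<theta>) * std_normal_even_moment (Suc n) = p - 1"
      using 2 by (simp add: \<theta>_def std_normal_even_moment_Suc field_simps)
    ultimately show ?thesis using p by simp
  next
    case 3
    have "\<theta> * std_normal_even_moment n + (1 - \<theta>) * std_normal_even_moment (Suc n)
        \<le> std_normal_even_moment (Suc n)"
      using \<theta> std_normal_even_moment_pos[of n]
      by (simp add: std_normal_even_moment_Suc algebra_simps mult_left_mono)
    also have "\<dots> \<le> (2 * real n) powr (real n)"
      using std_normal_even_moment_Suc_le 3 by (simp add: powr_realpow)
    also have "\<dots> \<le> p powr (p / 2)"
      using 3 p by (intro order_trans[OF powr_mono powr_mono2]) auto
    finally show ?thesis .
  qed
qed

text \<open>For \<open>2n \<le> p < 2n + 2\<close> the power \<open>\<bar>z\<bar>\<^sup>p\<close> lies below the chord between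
  \<open>z\<^sup>2\<^sup>n\<close> and \<open>z\<^sup>2\<^sup>n\<^sup>+\<^sup>2\<close>, whose Gaussian integrals are the double factorials.\<close>
lemma std_normal_abs_moment_le:
  fixes p :: real
  assumes p: "p \<ge> 1"
  shows "(\<integral>\<^sup>+z. ennreal (std_normal_density z * \<bar>z\<bar> powr p) \<partial>lborel) \<le> ennreal (p powr (p / 2))"
proof -
  define n where "n = nat \<lfloor>p / 2\<rfloor>"
  have n: "2 * real n \<le> p" "p < 2 * real n + 2" using p unfolding n_def by linarith+
  define \<theta> where "\<theta> = (2 * real n + 2 - p) / 2"
  have \<theta>: "0 \<le> \<theta>" "\<theta> \<le> 1" "p = \<theta> * (2 * n) + (1 - \<theta>) * (2 * n + 2)"
    using n by (auto simp: \<theta>_def field_simps)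
  define f where "f z = std_normal_density z * (\<theta> * z ^ (2 * n) + (1 - \<theta>) * z ^ (2 * Suc n))" for z
  have "has_bochner_integral lborel
      (\<lambda>z. \<theta> * (std_normal_density z * z ^ (2 * n)) + (1 - \<theta>) * (std_normal_density z * z ^ (2 * Suc n)))
      (\<theta> * std_normal_even_moment n + (1 - \<theta>) * std_normal_even_moment (Suc n))"
    unfolding std_normal_even_moment_def
    by (intro has_bochner_integral_add has_bochner_integral_mult_right std_normal_moment_even)
  moreover have "(\<lambda>z. \<theta> * (std_normal_density z * z ^ (2 * n)) + (1 - \<theta>) * (std_normal_density z * z ^ (2 * Suc n))) = f"
    by (auto simp: f_def algebra_simps)
  ultimately have "has_bochner_integral lborel f
      (\<theta> * std_normal_even_moment n + (1 - \<theta>) * std_normal_even_moment (Suc n))"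
    by simp
  moreover have "0 \<le> f z" for z
    using \<theta> unfolding f_def
    by (intro mult_nonneg_nonneg add_nonneg_nonneg) (auto simp only: power_mult zero_le_power2 zero_le_power normal_density_nonneg)
  ultimately have integral_f: "(\<integral>\<^sup>+z. ennreal (f z) \<partial>lborel)
      = ennreal (\<theta> * std_normal_even_moment n + (1 - \<theta>) * std_normal_even_moment (Suc n))"
    by (subst nn_integral_eq_integral) (auto simp: has_bochner_integral_iff)
  have "(\<integral>\<^sup>+z. ennreal (std_normal_density z * \<bar>z\<bar> powr p) \<partial>lborel) \<le> (\<integral>\<^sup>+z. ennreal (f z) \<partial>lborel)"
    unfolding f_def using abs_powr_le_convex_comb_even_powers[OF \<theta>]
    by (intro nn_integral_mono ennreal_leI mult_left_mono) simp_all
  also have "\<dots> \<le> ennreal (p powr (p / 2))"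
    unfolding integral_f using std_normal_even_moment_interpolation_le[OF p n] by (simp add: \<theta>_def)
  finally show ?thesis .
qed

abbreviation std_normal :: "real measure" where
  "std_normal \<equiv> density lborel std_normal_density"

lemma prob_space_std_normal: "prob_space std_normal"
  using prob_space_normal_density[of 1 0] by simp

lemma prob_space_gauss: "prob_space (gauss d)"
  unfolding gauss_def by (intro prob_space_PiM prob_space_std_normal)

lemma measurable_gauss_component: "i < d \<Longrightarrow> (\<lambda>x. x i) \<in> measurable (gauss d) std_normal"
  unfolding gauss_def by (intro measurable_component_singleton) auto

lemma borel_measurable_gauss_component: "i < d \<Longrightarrow> (\<lambda>x. x i) \<in> borel_measurable (gauss d)"
  using measurable_gauss_component by (simp add: measurable_cong_sets[OF sets_density refl])

lemma borel_measurable_gauss_linear_form: "(\<lambda>x. \<Sum>i<d. c i * x i) \<in> borel_measurable (gauss d)"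
  by (intro borel_measurable_sum borel_measurable_times borel_measurable_const
      borel_measurable_gauss_component) simp

lemma distributed_gauss_component:
  assumes "i < d"
  shows "distributed (gauss d) lborel (\<lambda>x. x i) std_normal_density"
proof -
  have "distr (gauss d) lborel (\<lambda>x. x i) = distr (gauss d) std_normal (\<lambda>x. x i)"
    by (rule distr_cong) auto
  also have "\<dots> = std_normal"
    unfolding gauss_def using assms prob_space_std_normal by (intro distr_PiM_component) auto
  finally show ?thesis
    using borel_measurable_gauss_component[OF assms] by (simp add: distributed_def)
qed

lemma indep_vars_gauss_components:
  assumes "d \<ge> 1"
  shows "prob_space.indep_vars (gauss d) (\<lambda>_. std_normal) (\<lambda>i x. x i) {..<d}"
proof -
  interpret G: prob_space "gauss d" by (rule prob_space_gauss)
  have "distr (gauss d) (\<Pi>\<^sub>M i\<in>{..<d}. std_normal) (\<lambda>x. \<lambda>i\<in>{..<d}. x i) = distr (gauss d) (gauss d) (\<lambda>x. x)"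
    by (rule distr_cong) (auto simp: gauss_def space_PiM)
  also have "\<dots> = (\<Pi>\<^sub>M i\<in>{..<d}. distr (gauss d) std_normal (\<lambda>x. x i))"
    unfolding distr_id gauss_def
    by (intro PiM_cong refl distr_PiM_component[symmetric] prob_space_std_normal) auto
  finally show ?thesis
    using assms measurable_gauss_component
    by (subst G.indep_vars_iff_distr_eq_PiM') (auto simp: lessThan_empty_iff)
qed

text \<open>Only the coordinates with \<open>c i \<noteq> 0\<close> enter the sum of independent normals,
  as \<open>sum_indep_normal\<close> requires positive standard deviations.\<close>
lemma distributed_gauss_linear_form:
  assumes pos: "0 < (\<Sum>i<d. (c i)\<^sup>2)"
  shows "distributed (gauss d) lborel (\<lambda>x. (\<Sum>i<d. c i * x i) / sqrt (\<Sum>i<d. (c i)\<^sup>2)) std_normal_density"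
proof -
  interpret G: prob_space "gauss d" by (rule prob_space_gauss)
  define I where "I = {i. i < d \<and> c i \<noteq> 0}"
  have I: "finite I" "I \<subseteq> {..<d}" by (auto simp: I_def)
  have on_I: "(\<Sum>i<d. c i * x i) = (\<Sum>i\<in>I. c i * x i)" "(\<Sum>i<d. (c i)\<^sup>2) = (\<Sum>i\<in>I. \<bar>c i\<bar>\<^sup>2)" for x
    by (auto simp: I_def intro: sum.mono_neutral_right)
  have "I \<noteq> {}" using pos by (auto simp: on_I)
  then have "d \<ge> 1" using I by auto
  have "G.indep_vars (\<lambda>_. borel) (\<lambda>i x. c i * x i) I"
    using G.indep_vars_subset[OF indep_vars_gauss_components[OF \<open>d \<ge> 1\<close>] I(2)]
    by (rule G.indep_vars_compose2) (simp add: measurable_cong_sets[OF sets_density refl])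
  moreover have "distributed (gauss d) lborel (\<lambda>x. c i * x i) (normal_density 0 \<bar>c i\<bar>)" if "i \<in> I" for i
    using G.normal_density_affine[OF distributed_gauss_component, of i "c i" 0] that by (simp add: I_def)
  ultimately have "distributed (gauss d) lborel (\<lambda>x. \<Sum>i\<in>I. c i * x i) (normal_density 0 (sqrt (\<Sum>i<d. (c i)\<^sup>2)))"
    using G.sum_indep_normal[OF I(1) \<open>I \<noteq> {}\<close>, of _ "\<lambda>i. \<bar>c i\<bar>" "\<lambda>_. 0"]
    by (auto simp: on_I I_def)
  then show ?thesis
    using G.normal_standard_normal_convert[of "sqrt (\<Sum>i<d. (c i)\<^sup>2)"] pos by (simp add: on_I)
qed

lemma nn_integral_gauss_linear_form_abs_powr:
  "(\<integral>\<^sup>+x. ennreal (\<bar>\<Sum>i<d. c i * x i\<bar> powr p) \<partial>gauss d)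
     = ennreal (sqrt (\<Sum>i<d. (c i)\<^sup>2) powr p)
       * (\<integral>\<^sup>+z. ennreal (std_normal_density z * \<bar>z\<bar> powr p) \<partial>lborel)"
proof (cases "(\<Sum>i<d. (c i)\<^sup>2) = 0")
  case True
  then have "c i = 0" if "i < d" for i
    using that by (subst (asm) sum_nonneg_eq_0_iff) auto
  then show ?thesis using True by simp
next
  case False
  define s where "s = sqrt (\<Sum>i<d. (c i)\<^sup>2)"
  have s: "0 < s" using False by (simp add: s_def sum_nonneg order_le_neq_trans)
  have Y: "distributed (gauss d) lborel (\<lambda>x. (\<Sum>i<d. c i * x i) / s) std_normal_density"
    using distributed_gauss_linear_form False by (simp add: s_def sum_nonneg order_le_neq_trans)
  have "(\<integral>\<^sup>+x. ennreal (\<bar>\<Sum>i<d. c i * x i\<bar> powr p) \<partial>gauss d)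
      = (\<integral>\<^sup>+x. ennreal (s powr p) * ennreal (\<bar>(\<Sum>i<d. c i * x i) / s\<bar> powr p) \<partial>gauss d)"
    using s by (intro nn_integral_cong) (simp add: abs_div powr_divide ennreal_mult[symmetric])
  also have "\<dots> = ennreal (s powr p) * (\<integral>\<^sup>+x. ennreal (\<bar>(\<Sum>i<d. c i * x i) / s\<bar> powr p) \<partial>gauss d)"
    using Y by (intro nn_integral_cmult) (auto simp: distributed_def simp del: abs_divide)
  also have "(\<integral>\<^sup>+x. ennreal (\<bar>(\<Sum>i<d. c i * x i) / s\<bar> powr p) \<partial>gauss d)
      = (\<integral>\<^sup>+z. ennreal (std_normal_density z) * ennreal (\<bar>z\<bar> powr p) \<partial>lborel)"
    by (rule distributed_nn_integral[OF Y, symmetric]) measurable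
  finally show ?thesis by (simp add: s_def ennreal_mult)
qed

lemma gauss_linear_form_abs_moment_le:
  assumes "p \<ge> 1"
  shows "(\<integral>\<^sup>+x. ennreal (\<bar>\<Sum>i<d. c i * x i\<bar> powr p) \<partial>gauss d)
           \<le> ennreal (sqrt (\<Sum>i<d. (c i)\<^sup>2) powr p * p powr (p / 2))"
  unfolding nn_integral_gauss_linear_form_abs_powr
  using mult_left_mono[OF std_normal_abs_moment_le[OF assms]] by (simp add: ennreal_mult)

section \<open>Moment bounds for the sub-Gaussian norm\<close>

text \<open>Terms with \<open>s k = 0\<close> vanish almost everywhere; the others are combined
  by \<open>powr_sum_le_weighted_sum\<close>.\<close>
lemma nn_integral_powr_sum_le:
  fixes f :: "'i \<Rightarrow> 'a \<Rightarrow> real" and s :: "'i \<Rightarrow> real" and p C :: real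
  assumes I: "finite I" and p: "p \<ge> 1" and C: "C \<ge> 0"
    and f_meas: "\<And>k. k \<in> I \<Longrightarrow> f k \<in> borel_measurable M"
    and f_nonneg: "\<And>k x. k \<in> I \<Longrightarrow> 0 \<le> f k x"
    and s_nonneg: "\<And>k. k \<in> I \<Longrightarrow> 0 \<le> s k"
    and moment: "\<And>k. k \<in> I \<Longrightarrow> (\<integral>\<^sup>+x. ennreal (f k x powr p) \<partial>M) \<le> ennreal (s k powr p * C)"
  shows "(\<integral>\<^sup>+x. ennreal ((\<Sum>k\<in>I. f k x) powr p) \<partial>M) \<le> ennreal ((\<Sum>k\<in>I. s k) powr p * C)"
proof -
  define J where "J = {k \<in> I. s k \<noteq> 0}"
  have J: "finite J" "J \<subseteq> I" using I by (auto simp: J_def)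
  have s_pos: "0 < s k" if "k \<in> J" for k
    using that s_nonneg by (auto simp: J_def order_le_neq_trans)
  have "AE x in M. f k x = 0" if "k \<in> I - J" for k
  proof -
    have "(\<integral>\<^sup>+x. ennreal (f k x powr p) \<partial>M) = 0"
      using moment[of k] that by (auto simp: J_def)
    then have "AE x in M. ennreal (f k x powr p) = 0"
      using f_meas that by (subst (asm) nn_integral_0_iff_AE) auto
    then show ?thesis by eventually_elim (use f_nonneg that in \<open>auto simp: powr_def split: if_splits\<close>)
  qed
  then have "AE x in M. \<forall>k\<in>I - J. f k x = 0"
    using I by (subst AE_finite_all) auto
  then have sum_J: "AE x in M. (\<Sum>k\<in>I. f k x) = (\<Sum>k\<in>J. f k x)"
    by eventually_elim (rule sum.mono_neutral_right[OF I J(2)])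
  have sum_s: "(\<Sum>k\<in>I. s k) = (\<Sum>k\<in>J. s k)"
    using I J by (intro sum.mono_neutral_right) (auto simp: J_def)
  show ?thesis
  proof (cases "J = {}")
    case True
    have "AE x in M. ennreal ((\<Sum>k\<in>I. f k x) powr p) = 0"
      using sum_J by eventually_elim (simp add: True)
    moreover have "(\<lambda>x. \<Sum>k\<in>I. f k x) \<in> borel_measurable M"
      using f_meas by (rule borel_measurable_sum)
    ultimately have "(\<integral>\<^sup>+x. ennreal ((\<Sum>k\<in>I. f k x) powr p) \<partial>M) = 0"
      by (subst nn_integral_0_iff_AE) (auto intro!: measurable_compose[OF _ measurable_ennreal] powr_real_measurable)
    then show ?thesis by simp
  next
    case False
    define S where "S = (\<Sum>k\<in>J. s k)"
    have S: "0 < S" unfolding S_def using J False s_pos by (intro sum_pos) auto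
    define w where "w k = S powr (p - 1) * s k powr (1 - p)" for k
    have w: "0 \<le> w k" for k by (simp add: w_def)
    have "(\<integral>\<^sup>+x. ennreal ((\<Sum>k\<in>I. f k x) powr p) \<partial>M)
        \<le> (\<integral>\<^sup>+x. (\<Sum>k\<in>J. ennreal (w k) * ennreal (f k x powr p)) \<partial>M)"
    proof (intro nn_integral_mono_AE, use sum_J in eventually_elim)
      fix x assume "(\<Sum>k\<in>I. f k x) = (\<Sum>k\<in>J. f k x)"
      moreover have "(\<Sum>k\<in>J. f k x) powr p \<le> S powr (p - 1) * (\<Sum>k\<in>J. s k powr (1 - p) * f k x powr p)"
        unfolding S_def by (rule powr_sum_le_weighted_sum) (use J False p s_pos f_nonneg in auto)
      moreover have "(\<Sum>k\<in>J. ennreal (w k) * ennreal (f k x powr p)) = ennreal (\<Sum>k\<in>J. w k * f k x powr p)"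
        using w by (subst sum_ennreal[symmetric]) (auto simp: ennreal_mult)
      ultimately show "ennreal ((\<Sum>k\<in>I. f k x) powr p) \<le> (\<Sum>k\<in>J. ennreal (w k) * ennreal (f k x powr p))"
        by (simp add: w_def sum_distrib_left mult.assoc ennreal_leI)
    qed
    also have "\<dots> = (\<Sum>k\<in>J. ennreal (w k) * (\<integral>\<^sup>+x. ennreal (f k x powr p) \<partial>M))"
      using J f_meas by (subst nn_integral_sum) (auto intro!: sum.cong nn_integral_cmult)
    also have "\<dots> \<le> (\<Sum>k\<in>J. ennreal (w k) * ennreal (s k powr p * C))"
      using J moment by (intro sum_mono mult_left_mono) auto
    also have "\<dots> = ennreal (\<Sum>k\<in>J. w k * (s k powr p * C))"
      using w C by (subst sum_ennreal[symmetric]) (auto simp: ennreal_mult)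
    also have "(\<Sum>k\<in>J. w k * (s k powr p * C)) = (\<Sum>k\<in>J. S powr (p - 1) * C * s k)"
    proof (intro sum.cong refl)
      fix k assume "k \<in> J"
      then have "s k powr (1 - p) * s k powr p = s k"
        using s_pos[of k] by (simp add: powr_add[symmetric])
      then show "w k * (s k powr p * C) = S powr (p - 1) * C * s k"
        by (simp add: w_def algebra_simps)
    qed
    also have "\<dots> = S powr (p - 1) * S * C"
      unfolding S_def sum_distrib_left sum_distrib_right by (simp add: algebra_simps)
    also have "\<dots> = S powr p * C"
      using S by (simp add: powr_diff)
    finally show ?thesis by (simp add: sum_s S_def)
  qed
qed

lemma psi2_norm_le_if_moments_le:
  fixes X :: "'a \<Rightarrow> real" and S :: real
  assumes S: "0 \<le> S"
    and moment: "\<And>p. p \<ge> 1 \<Longrightarrow> (\<integral>\<^sup>+\<omega>. ennreal (\<bar>X \<omega>\<bar> powr p) \<partial>M) \<le> ennreal (S powr p * p powr (p / 2))"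
  shows "psi2_norm M X \<le> ennreal S"
  unfolding psi2_norm_def
proof (rule SUP_least)
  fix p :: real assume "p \<in> {1..}"
  then have p: "p \<ge> 1" by simp
  define I where "I = (\<integral>\<^sup>+\<omega>. ennreal (\<bar>X \<omega>\<bar> powr p) \<partial>M)"
  have I: "I \<le> ennreal (S powr p * p powr (p / 2))" using moment[OF p] by (simp add: I_def)
  then have "I \<noteq> \<infinity>" by (auto simp: top_unique)
  have "enn2real I powr (1 / p) \<le> (S powr p * p powr (p / 2)) powr (1 / p)"
    using I p by (intro powr_mono2) (auto intro: enn2real_leI)
  also have "\<dots> = S * p powr (1 / 2)"
    using p S by (simp add: powr_mult powr_powr)
  finally have "p powr (-1 / 2) * enn2real I powr (1 / p) \<le> p powr (-1 / 2) * (S * p powr (1 / 2))"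
    by (rule mult_left_mono) simp
  also have "\<dots> = S"
    using p by (simp add: powr_add[symmetric] algebra_simps)
  finally have "ennreal (p powr (-1 / 2) * enn2real I powr (1 / p)) \<le> ennreal S"
    by (rule ennreal_leI)
  then show "ennreal (p powr (-1 / 2)) * enn_powr I (1 / p) \<le> ennreal S"
    using \<open>I \<noteq> \<infinity>\<close> by (simp add: enn_powr_def ennreal_mult)
qed

lemma nn_integral_joint_fst:
  fixes Hs :: "(nat \<Rightarrow> real) \<Rightarrow> real" and B :: "(nat \<Rightarrow> real) \<Rightarrow> ennreal"
  assumes Hs: "Hs \<in> borel_measurable (gauss d)" "\<And>x. 0 \<le> Hs x \<and> Hs x \<le> 1"
    and B: "B \<in> borel_measurable (gauss d)"
  shows "(\<integral>\<^sup>+\<omega>. B (fst \<omega>) \<partial>joint d Hs) = (\<integral>\<^sup>+x. B x \<partial>gauss d)"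
proof -
  interpret C: sigma_finite_measure "count_space (UNIV :: bool set)"
    by (rule sigma_finite_measure_count_space_finite) simp
  let ?f = "\<lambda>(x, y). ennreal (if y then Hs x else 1 - Hs x)"
  have "(\<integral>\<^sup>+\<omega>. B (fst \<omega>) \<partial>joint d Hs) = (\<integral>\<^sup>+\<omega>. ?f \<omega> * B (fst \<omega>) \<partial>(gauss d \<Otimes>\<^sub>M count_space UNIV))"
    unfolding joint_def
  proof (rule nn_integral_density)
    show "?f \<in> borel_measurable (gauss d \<Otimes>\<^sub>M count_space UNIV)" using Hs(1) by measurable
  qed (use B in measurable)
  also have "\<dots> = (\<integral>\<^sup>+x. \<integral>\<^sup>+y. ?f (x, y) * B (fst (x, y)) \<partial>count_space UNIV \<partial>gauss d)"
    by (rule C.nn_integral_fst[symmetric]) (use Hs(1) B in measurable)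
  also have "\<dots> = (\<integral>\<^sup>+x. (ennreal (Hs x) + ennreal (1 - Hs x)) * B x \<partial>gauss d)"
    by (simp add: nn_integral_count_space_finite UNIV_bool distrib_right add.commute)
  also have "\<dots> = (\<integral>\<^sup>+x. B x \<partial>gauss d)"
    using Hs(2) by (simp add: ennreal_plus[symmetric] del: ennreal_plus)
  finally show ?thesis .
qed

lemma psi2_norm_joint_le:
  fixes Hs :: "(nat \<Rightarrow> real) \<Rightarrow> real" and g :: "(nat \<Rightarrow> real) \<times> bool \<Rightarrow> real"
    and c :: "nat \<Rightarrow> nat \<Rightarrow> real"
  assumes Hs: "Hs \<in> borel_measurable (gauss d)" "\<And>x. 0 \<le> Hs x \<and> Hs x \<le> 1"
    and g: "\<And>x y. \<bar>g (x, y)\<bar> \<le> (\<Sum>k<K. \<bar>\<Sum>i<d. c k i * x i\<bar>)"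
  shows "psi2_norm (joint d Hs) g \<le> ennreal (\<Sum>k<K. sqrt (\<Sum>i<d. (c k i)\<^sup>2))"
proof (rule psi2_norm_le_if_moments_le)
  show "0 \<le> (\<Sum>k<K. sqrt (\<Sum>i<d. (c k i)\<^sup>2))"
    by (intro sum_nonneg real_sqrt_ge_zero sum_nonneg) simp
next
  fix p :: real assume p: "p \<ge> 1"
  define B where "B x = ennreal ((\<Sum>k<K. \<bar>\<Sum>i<d. c k i * x i\<bar>) powr p)" for x :: "nat \<Rightarrow> real"
  have "(\<lambda>x. \<Sum>i<d. c k i * x i) \<in> borel_measurable (gauss d)" for k
    by (rule borel_measurable_gauss_linear_form)
  then have B: "B \<in> borel_measurable (gauss d)"
    unfolding B_def by measurable
  have "(\<integral>\<^sup>+\<omega>. ennreal (\<bar>g \<omega>\<bar> powr p) \<partial>joint d Hs) \<le> (\<integral>\<^sup>+\<omega>. B (fst \<omega>) \<partial>joint d Hs)"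
    unfolding B_def using g p by (intro nn_integral_mono ennreal_leI powr_mono2) auto
  also have "\<dots> = (\<integral>\<^sup>+x. B x \<partial>gauss d)"
    by (rule nn_integral_joint_fst[OF Hs B])
  also have "\<dots> \<le> ennreal ((\<Sum>k<K. sqrt (\<Sum>i<d. (c k i)\<^sup>2)) powr p * p powr (p / 2))"
    unfolding B_def
    by (rule nn_integral_powr_sum_le)
      (use p borel_measurable_gauss_linear_form gauss_linear_form_abs_moment_le in \<open>auto intro: sum_nonneg\<close>)
  finally show "(\<integral>\<^sup>+\<omega>. ennreal (\<bar>g \<omega>\<bar> powr p) \<partial>joint d Hs)
      \<le> ennreal ((\<Sum>k<K. sqrt (\<Sum>i<d. (c k i)\<^sup>2)) powr p * p powr (p / 2))" .
qed

section \<open>Derivative of the loss\<close>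

lemma sigmoid_pos: "0 < sigmoid t"
  and sigmoid_less_1: "sigmoid t < 1"
  unfolding sigmoid_def by (auto simp: add_pos_pos)

lemma sigmoid_has_real_derivative:
  "(sigmoid has_real_derivative sigmoid t * (1 - sigmoid t)) (at t)"
proof -
  have pos: "1 + exp (- t) \<noteq> 0" by (smt (verit) exp_gt_zero)
  have "((\<lambda>t. 1 / (1 + exp (- t))) has_real_derivative exp (- t) / (1 + exp (- t))\<^sup>2) (at t)"
    by (rule derivative_eq_intros refl | use pos in \<open>simp add: power2_eq_square field_simps\<close>)+
  moreover have "exp (- t) / (1 + exp (- t))\<^sup>2 = sigmoid t * (1 - sigmoid t)"
    unfolding sigmoid_def using pos by (simp add: power2_eq_square field_simps)
  ultimately show ?thesis unfolding sigmoid_def[abs_def] by simp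
qed

lemma ce_loss_has_real_derivative:
  assumes "(h has_real_derivative h') (at t)" and "0 < h t" "h t < 1"
  shows "((\<lambda>t. ce_loss (h t) y) has_real_derivative (if y then - h' / h t else h' / (1 - h t))) (at t)"
proof -
  have "((\<lambda>t. ln (h t)) has_real_derivative h' / h t) (at t)"
    "((\<lambda>t. ln (1 - h t)) has_real_derivative - h' / (1 - h t)) (at t)"
    using assms by (auto intro!: derivative_eq_intros simp: field_simps)
  then show ?thesis
    unfolding ce_loss_def by (cases y) (auto intro: derivative_eq_intros)
qed

lemma abs_sum_mult_one_minus_le:
  fixes r a :: "'i \<Rightarrow> real"
  assumes "finite K" and r: "\<And>k. k \<in> K \<Longrightarrow> 0 \<le> r k \<and> r k \<le> 1"
  shows "\<bar>\<Sum>k\<in>K. r k * (1 - r k) * a k\<bar> \<le> (\<Sum>k\<in>K. r k) * (\<Sum>k\<in>K. \<bar>a k\<bar>)"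
proof -
  have "\<bar>\<Sum>k\<in>K. r k * (1 - r k) * a k\<bar> \<le> (\<Sum>k\<in>K. r k * (1 - r k) * \<bar>a k\<bar>)"
    using r by (intro order_trans[OF sum_abs] sum_mono) (simp add: abs_mult)
  also have "\<dots> \<le> (\<Sum>k\<in>K. (\<Sum>j\<in>K. r j) * \<bar>a k\<bar>)"
  proof (intro sum_mono mult_right_mono)
    fix k assume k: "k \<in> K"
    have "r k * (1 - r k) \<le> r k" using r[OF k] by (simp add: mult_left_le)
    also have "\<dots> \<le> (\<Sum>j\<in>K. r j)" using k r \<open>finite K\<close> by (intro member_le_sum) auto
    finally show "r k * (1 - r k) \<le> (\<Sum>j\<in>K. r j)" .
  qed simp
  finally show ?thesis by (simp add: sum_distrib_left)
qed

lemma sigmoid_mean_has_real_derivative: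
  fixes z a :: "nat \<Rightarrow> real"
  shows "((\<lambda>t. (1 / real K) * (\<Sum>k<K. sigmoid (z k + t * a k))) has_real_derivative
      (1 / real K) * (\<Sum>k<K. sigmoid (z k) * (1 - sigmoid (z k)) * a k)) (at 0)"
proof (intro DERIV_cmult DERIV_sum)
  fix k
  have "((\<lambda>t. z k + t * a k) has_real_derivative a k) (at 0)"
    by (rule derivative_eq_intros refl | simp)+
  from DERIV_chain2[OF sigmoid_has_real_derivative this]
  show "((\<lambda>t. sigmoid (z k + t * a k)) has_real_derivative sigmoid (z k) * (1 - sigmoid (z k)) * a k) (at 0)"
    by simp
qed

lemma abs_deriv_ce_loss_sigmoid_mean_le:
  fixes z a :: "nat \<Rightarrow> real"
  assumes K: "K \<ge> 1"
  shows "\<bar>deriv (\<lambda>t. ce_loss ((1 / real K) * (\<Sum>k<K. sigmoid (z k + t * a k))) y) 0\<bar> \<le> (\<Sum>k<K. \<bar>a k\<bar>)"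
proof -
  define h where "h t = (1 / real K) * (\<Sum>k<K. sigmoid (z k + t * a k))" for t
  define \<sigma> where "\<sigma> k = sigmoid (z k)" for k
  define N where "N = (\<Sum>k<K. \<sigma> k * (1 - \<sigma> k) * a k)"
  have \<sigma>: "0 < \<sigma> k" "\<sigma> k < 1" for k by (simp_all add: \<sigma>_def sigmoid_pos sigmoid_less_1)
  have h_deriv: "(h has_real_derivative (1 / real K) * N) (at 0)"
    unfolding h_def N_def \<sigma>_def by (rule sigmoid_mean_has_real_derivative)
  have h0: "h 0 = (\<Sum>k<K. \<sigma> k) / real K" "1 - h 0 = (\<Sum>k<K. 1 - \<sigma> k) / real K"
    using K by (simp_all add: h_def \<sigma>_def sum_subtractf field_simps)
  have sums_pos: "0 < (\<Sum>k<K. \<sigma> k)" "0 < (\<Sum>k<K. 1 - \<sigma> k)"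
    using K \<sigma> by (auto intro!: sum_pos simp: lessThan_empty_iff)
  have h0_bounds: "0 < h 0" "h 0 < 1"
    using sums_pos K by (subst h0; simp add: sum_subtractf)+
  have "deriv (\<lambda>t. ce_loss (h t) y) 0 = (if y then - ((1 / real K) * N) / h 0 else (1 / real K) * N / (1 - h 0))"
    by (rule DERIV_imp_deriv ce_loss_has_real_derivative[OF h_deriv h0_bounds])+
  also have "\<dots> = (if y then - N / (\<Sum>k<K. \<sigma> k) else N / (\<Sum>k<K. 1 - \<sigma> k))"
    using K by (subst h0(2), subst h0(1)) simp
  finally have deriv: "\<bar>deriv (\<lambda>t. ce_loss (h t) y) 0\<bar>
      = \<bar>N\<bar> / (if y then (\<Sum>k<K. \<sigma> k) else (\<Sum>k<K. 1 - \<sigma> k))"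
    using sums_pos by (simp add: abs_divide)
  have bound: "\<bar>\<Sum>k<K. r k * (1 - r k) * a k\<bar> / (\<Sum>k<K. r k) \<le> (\<Sum>k<K. \<bar>a k\<bar>)"
    if "\<And>k. 0 \<le> r k \<and> r k \<le> 1" "0 < (\<Sum>k<K. r k)" for r
    using abs_sum_mult_one_minus_le[of "{..<K}" r a] that by (simp add: divide_le_eq mult.commute)
  \<comment> \<open>\<open>N\<close> is invariant under \<open>\<sigma> \<mapsto> 1 - \<sigma>\<close>, which reduces the case \<open>\<not> y\<close> to the case \<open>y\<close>.\<close>
  have N_sym: "N = (\<Sum>k<K. (1 - \<sigma> k) * (1 - (1 - \<sigma> k)) * a k)"
    unfolding N_def by (intro sum.cong) simp_all
  have "0 \<le> \<sigma> k \<and> \<sigma> k \<le> 1" "0 \<le> 1 - \<sigma> k \<and> 1 - \<sigma> k \<le> 1" for k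
    using \<sigma>[of k] by simp_all
  then have "\<bar>deriv (\<lambda>t. ce_loss (h t) y) 0\<bar> \<le> (\<Sum>k<K. \<bar>a k\<bar>)"
    unfolding deriv
    using bound[of \<sigma>, folded N_def] bound[of "\<lambda>k. 1 - \<sigma> k", folded N_sym] sums_pos
    by simp
  then show ?thesis unfolding h_def .
qed

section \<open>The two networks\<close>

lemma borel_measurable_sigmoid_mean:
  "(\<lambda>x. (1 / real K) * (\<Sum>k<K. sigmoid (\<Sum>i<d. c k i * x i))) \<in> borel_measurable (gauss d)"
proof -
  have "(\<lambda>x. \<Sum>i<d. c k i * x i) \<in> borel_measurable (gauss d)" for k
    by (rule borel_measurable_gauss_linear_form)
  then show ?thesis unfolding sigmoid_def by measurable
qed

lemma sigmoid_mean_bounds: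
  assumes "K \<ge> 1"
  shows "0 \<le> (1 / real K) * (\<Sum>k<K. sigmoid (f k)) \<and> (1 / real K) * (\<Sum>k<K. sigmoid (f k)) \<le> 1"
proof -
  have "0 \<le> (\<Sum>k<K. sigmoid (f k))" "(\<Sum>k<K. sigmoid (f k)) \<le> (\<Sum>k<K. 1)"
    by (intro sum_nonneg sum_mono; simp add: sigmoid_pos sigmoid_less_1 less_imp_le)+
  then show ?thesis using assms by (auto simp: field_simps)
qed

text \<open>The shared filter \<open>f\<close> placed on patch \<open>k\<close> of an input in \<open>\<real>\<^sup>m\<^sup>K\<close>,
  so that \<open>\<langle>f, x\<^sup>(\<^sup>k\<^sup>)\<rangle> = \<langle>patch_filter m k f, x\<rangle>\<close>.\<close>
definition patch_filter :: "nat \<Rightarrow> nat \<Rightarrow> (nat \<Rightarrow> real) \<Rightarrow> nat \<Rightarrow> real" where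
  "patch_filter m k f i = (if m * k \<le> i \<and> i < m * k + m then f (i - m * k) else 0)"

lemma sum_patch_filter_mult:
  assumes "k < K"
  shows "(\<Sum>i<m * K. patch_filter m k f i * x i) = (\<Sum>i<m. f i * x (m * k + i))"
proof -
  have "m * k + m \<le> m * K"
    using assms mult_le_mono2[of "Suc k" K m] by simp
  then have "(\<Sum>i<m * K. patch_filter m k f i * x i) = (\<Sum>i\<in>{m * k..<m * k + m}. f (i - m * k) * x i)"
    unfolding patch_filter_def by (intro sum.mono_neutral_cong_right) auto
  also have "\<dots> = (\<Sum>i<m. f i * x (m * k + i))"
    using sum.shift_bounds_nat_ivl[of "\<lambda>i. f (i - m * k) * x i" 0 "m * k" m]
    by (simp add: lessThan_atLeast0 add.commute)
  finally show ?thesis .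
qed

lemma sum_patch_filter_sq:
  assumes "k < K"
  shows "(\<Sum>i<m * K. (patch_filter m k f i)\<^sup>2) = (\<Sum>i<m. (f i)\<^sup>2)"
proof -
  have "(patch_filter m k f i)\<^sup>2 = patch_filter m k (\<lambda>i. (f i)\<^sup>2) i * 1" for i
    by (simp add: patch_filter_def)
  then show ?thesis
    using sum_patch_filter_mult[OF assms, where f = "\<lambda>i. (f i)\<^sup>2" and x = "\<lambda>_. 1"] by simp
qed

lemma fcn_directional_loss_psi2_le:
  assumes K: "K \<ge> 1" and u: "(\<Sum>k<K. \<Sum>i<d. (u i k)\<^sup>2) = 1"
  shows "psi2_norm (joint d (fcn d K Wstar))
           (\<lambda>(x, y). deriv (\<lambda>t. ce_loss (fcn d K (\<lambda>i k. W i k + t * u i k) x) y) 0)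
         \<le> ennreal (sqrt (real K))"
proof -
  have fcn_line: "fcn d K (\<lambda>i k. W i k + t * u i k) x
      = (1 / real K) * (\<Sum>k<K. sigmoid ((\<Sum>i<d. W i k * x i) + t * (\<Sum>i<d. u i k * x i)))" for x t
    unfolding fcn_def by (simp add: distrib_right sum.distrib sum_distrib_left mult.assoc)
  have "psi2_norm (joint d (fcn d K Wstar))
           (\<lambda>(x, y). deriv (\<lambda>t. ce_loss (fcn d K (\<lambda>i k. W i k + t * u i k) x) y) 0)
        \<le> ennreal (\<Sum>k<K. sqrt (\<Sum>i<d. (u i k)\<^sup>2))"
  proof (rule psi2_norm_joint_le)
    show "fcn d K Wstar \<in> borel_measurable (gauss d)"
      unfolding fcn_def[abs_def] using borel_measurable_sigmoid_mean[where c = "\<lambda>k i. Wstar i k"] by simp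
    show "0 \<le> fcn d K Wstar x \<and> fcn d K Wstar x \<le> 1" for x
      unfolding fcn_def by (rule sigmoid_mean_bounds[OF K])
    show "\<bar>(\<lambda>(x, y). deriv (\<lambda>t. ce_loss (fcn d K (\<lambda>i k. W i k + t * u i k) x) y) 0) (x, y)\<bar>
        \<le> (\<Sum>k<K. \<bar>\<Sum>i<d. u i k * x i\<bar>)" for x y
      unfolding fcn_line case_prod_conv by (rule abs_deriv_ce_loss_sigmoid_mean_le[OF K])
  qed
  also have "(\<Sum>k<K. sqrt (\<Sum>i<d. (u i k)\<^sup>2)) \<le> sqrt (real K)"
  proof -
    have "(\<Sum>k<K. sqrt (\<Sum>i<d. (u i k)\<^sup>2))\<^sup>2 \<le> (\<Sum>k<K. (sqrt (\<Sum>i<d. (u i k)\<^sup>2))\<^sup>2) * card {..<K}"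
      by (rule sum_squared_le_sum_of_squares)
    also have "\<dots> = real K" using u by (simp add: sum_nonneg)
    finally show ?thesis by (simp add: real_le_rsqrt)
  qed
  finally show ?thesis by (simp add: ennreal_leI)
qed

lemma cnn_directional_loss_psi2_le:
  assumes K: "K \<ge> 1" and u: "(\<Sum>i<m. (u i)\<^sup>2) = 1"
  shows "psi2_norm (joint (m * K) (cnn m K wstar))
           (\<lambda>(x, y). deriv (\<lambda>t. ce_loss (cnn m K (\<lambda>i. w i + t * u i) x) y) 0)
         \<le> ennreal (real K)"
proof -
  have cnn_patch: "cnn m K f x = (1 / real K) * (\<Sum>k<K. sigmoid (\<Sum>i<m * K. patch_filter m k f i * x i))" for f x
    unfolding cnn_def by (simp add: sum_patch_filter_mult)
  have cnn_line: "cnn m K (\<lambda>i. w i + t * u i) x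
      = (1 / real K) * (\<Sum>k<K. sigmoid ((\<Sum>i<m. w i * x (m * k + i)) + t * (\<Sum>i<m. u i * x (m * k + i))))" for x t
    unfolding cnn_def by (simp add: distrib_right sum.distrib sum_distrib_left mult.assoc)
  have "psi2_norm (joint (m * K) (cnn m K wstar))
           (\<lambda>(x, y). deriv (\<lambda>t. ce_loss (cnn m K (\<lambda>i. w i + t * u i) x) y) 0)
        \<le> ennreal (\<Sum>k<K. sqrt (\<Sum>i<m * K. (patch_filter m k u i)\<^sup>2))"
  proof (rule psi2_norm_joint_le)
    show "cnn m K wstar \<in> borel_measurable (gauss (m * K))"
      unfolding cnn_patch[abs_def] by (rule borel_measurable_sigmoid_mean)
    show "0 \<le> cnn m K wstar x \<and> cnn m K wstar x \<le> 1" for x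
      unfolding cnn_def by (rule sigmoid_mean_bounds[OF K])
    show "\<bar>(\<lambda>(x, y). deriv (\<lambda>t. ce_loss (cnn m K (\<lambda>i. w i + t * u i) x) y) 0) (x, y)\<bar>
        \<le> (\<Sum>k<K. \<bar>\<Sum>i<m * K. patch_filter m k u i * x i\<bar>)" for x y
      unfolding cnn_line case_prod_conv
      using abs_deriv_ce_loss_sigmoid_mean_le[OF K] by (simp add: sum_patch_filter_mult)
  qed
  also have "(\<Sum>k<K. sqrt (\<Sum>i<m * K. (patch_filter m k u i)\<^sup>2)) = real K"
    by (simp add: sum_patch_filter_sq u)
  finally show ?thesis .
qed

theorem lemma11:
  shows "(\<forall>d K. d \<ge> 1 \<longrightarrow> K \<ge> 1 \<longrightarrow>
           (\<forall>(Wstar :: nat \<Rightarrow> nat \<Rightarrow> real) (W :: nat \<Rightarrow> nat \<Rightarrow> real) (u :: nat \<Rightarrow> nat \<Rightarrow> real).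
              (\<Sum>k<K. \<Sum>i<d. (u i k)\<^sup>2) = 1 \<longrightarrow>
              psi2_norm (joint d (fcn d K Wstar))
                (\<lambda>(x, y). deriv (\<lambda>t. ce_loss (fcn d K (\<lambda>i k. W i k + t * u i k) x) y) 0)
              \<le> ennreal (sqrt (real K))))
       \<and> (\<exists>C::real. \<forall>m K. m \<ge> 1 \<longrightarrow> K \<ge> 1 \<longrightarrow>
           (\<forall>(wstar :: nat \<Rightarrow> real) (w :: nat \<Rightarrow> real) (u :: nat \<Rightarrow> real).
              (\<Sum>i<m. (u i)\<^sup>2) = 1 \<longrightarrow>
              psi2_norm (joint (m * K) (cnn m K wstar))
                (\<lambda>(x, y). deriv (\<lambda>t. ce_loss (cnn m K (\<lambda>i. w i + t * u i) x) y) 0)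
              \<le> ennreal (C * real K)))"
  using fcn_directional_loss_psi2_le cnn_directional_loss_psi2_le
  by (intro conjI allI impI exI[of _ 1]) simp_all

end
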